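(* Let $\alpha\in(1,2)$ and let $X_1$ be a random variable with characteristic function $\mathbb{E}e^{itX_1}=\exp\left(\int_0^1(e^{itx}-1-itx)\frac{dx}{x^{\alpha+1}}\right)$. Then for $0\le y\le\frac{1}{2-\alpha}$, $$\mathbb{P}(X_1\ge y)\le e^{1/4}e^{-\frac12(2-\alpha)y^2},$$ and for $0\le y\le\frac{2}{2-\alpha}$, $$\mathbb{P}(X_1\le -y)\le e^{4/3}e^{-\frac12(2-\alpha)y^2}.$$ *)

theory Defs
  imports "HOL-Probability.Probability"
begin

end

theory Submission
  imports Defs
begin

text \<open>
  \<open>X\<^sub>1\<close> is the weak limit of compound Poisson sums: truncate the Levy measure
  \<open>x\<^sup>-\<^sup>\<alpha>\<^sup>-\<^sup>1 dx\<close> to \<open>[\<epsilon>, 1]\<close>, where it has finite mass \<open>\<Lambda>\<close>, and add \<open>n\<close> independent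
  jumps, each \<open>0\<close> with probability \<open>1 - \<Lambda>/n\<close> and otherwise drawn from the truncated measure,
  recentred by the truncated drift. Since \<open>|(1 + w)\<^sup>n - exp (n w)| \<le> n |w|\<^sup>2\<close> for
  \<open>Re w \<le> 0\<close>, their characteristic functions converge to that of \<open>X\<^sub>1\<close> as \<open>\<epsilon> \<rightarrow> 0\<close>,
  \<open>\<Lambda>\<^sup>2/n \<rightarrow> 0\<close>, so Levy's continuity theorem gives weak convergence. By \<open>1 + u \<le> exp u\<close> the
  moment generating function of an approximant is at most \<open>exp \<kappa>\<^sub>\<epsilon>(\<lambda>)\<close> with
  \<open>\<kappa>\<^sub>\<epsilon>(\<lambda>) = \<integral>\<^sub>\<epsilon>\<^sup>1 (exp (\<lambda>x) - 1 - \<lambda>x) x\<^sup>-\<^sup>\<alpha>\<^sup>-\<^sup>1 dx\<close>, and the resulting Chernoff bound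
  passes to the weak limit. Finally \<open>exp u - 1 - u \<le> u\<^sup>2/2\<close> for \<open>u \<le> 0\<close> and
  \<open>\<le> u\<^sup>2/2 + u\<^sup>3/4\<close> for \<open>0 \<le> u \<le> 1\<close> give \<open>\<kappa>\<^sub>\<epsilon>(\<lambda>) \<le> \<lambda>\<^sup>2/(2(2 - \<alpha>))\<close>, plus \<open>1/4\<close> when
  \<open>0 \<le> \<lambda> \<le> 1\<close>, and the choice \<open>\<lambda> = \<plusminus>(2 - \<alpha>) y\<close> yields both tail bounds.
\<close>

section \<open>Taylor bounds for the exponential\<close>

lemma norm_exp_minus_one_minus_le:
  fixes z :: complex
  assumes "Re z \<le> 0"
  shows "norm (exp z - 1 - z) \<le> norm z ^ 2"
proof -
  have "norm (exp z - (\<Sum>i\<le>1. exp 0 * (z - 0) ^ i / fact i)) \<le> 1 * norm (z - 0) ^ Suc 1 / fact 1"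
    by (rule complex_Taylor[where S = "{w. Re w \<le> 0}" and f = "\<lambda>_. exp"])
       (use assms in \<open>auto intro: convex_halfspace_Re_le derivative_eq_intros\<close>)
  then show ?thesis by (simp add: algebra_simps power2_eq_square)
qed

lemma exp_minus_one_minus_le_nonpos:
  fixes u :: real
  assumes "u \<le> 0"
  shows "exp u - 1 - u \<le> u\<^sup>2 / 2"
proof -
  obtain t where "exp u = (\<Sum>m<3. u ^ m / fact m) + exp t / fact 3 * u ^ 3"
    using Maclaurin_exp_le[of u 3] by blast
  moreover have "exp t / fact 3 * u ^ 3 \<le> 0"
    using assms by (intro mult_nonneg_nonpos) (auto simp: power_le_zero_eq)
  ultimately show ?thesis
    by (simp add: eval_nat_numeral field_simps)
qed

lemma exp_minus_one_minus_le_cubic: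
  fixes u :: real
  assumes "0 \<le> u" "u \<le> 1"
  shows "exp u - 1 - u \<le> u\<^sup>2 / 2 + u ^ 3 / 4"
proof -
  obtain t where t: "\<bar>t\<bar> \<le> \<bar>u\<bar>" "exp u = (\<Sum>m<5. u ^ m / fact m) + exp t / fact 5 * u ^ 5"
    using Maclaurin_exp_le[of u 5] by blast
  then have expand: "exp u = 1 + u + u\<^sup>2 / 2 + u ^ 3 / 6 + u ^ 4 / 24 + exp t / 120 * u ^ 5"
    by (simp add: power2_eq_square eval_nat_numeral fact_numeral)
  have "exp t \<le> 3"
    using t(1) assms exp_le by (smt (verit) exp_le_cancel_iff)
  then have "exp t / 120 * u ^ 5 \<le> 3 / 120 * u ^ 3"
    using assms by (intro mult_mono power_decreasing) auto
  moreover have "u ^ 4 \<le> u ^ 3" "0 \<le> u ^ 3"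
    using assms by (auto intro: power_decreasing)
  ultimately show ?thesis using expand by linarith
qed

section \<open>The truncated Levy measure\<close>

definition levy_density :: "real \<Rightarrow> real \<Rightarrow> real" where
  "levy_density a x = 1 / x powr (a + 1)"

definition levy_mass :: "real \<Rightarrow> real \<Rightarrow> real" where
  "levy_mass a e = (LBINT x:{e..1}. levy_density a x)"

definition levy_drift :: "real \<Rightarrow> real \<Rightarrow> real" where
  "levy_drift a e = (LBINT x:{e..1}. x * levy_density a x)"

lemma levy_density_nonneg: "0 \<le> levy_density a x"
  by (simp add: levy_density_def)

lemma continuous_on_levy_density: "0 < e \<Longrightarrow> continuous_on {e..} (levy_density a)"
  unfolding levy_density_def by (intro continuous_intros) auto

lemma levy_density_measurable [measurable]: "levy_density a \<in> borel_measurable borel"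
  unfolding levy_density_def by measurable

lemma set_integrable_levy_density_mult:
  fixes f :: "real \<Rightarrow> 'b::{banach, second_countable_topology}"
  assumes "0 < e" "continuous_on {e..1} f"
  shows "set_integrable lborel {e..1} (\<lambda>x. levy_density a x *\<^sub>R f x)"
  using assms
  by (intro borel_integrable_atLeastAtMost' continuous_intros
        continuous_on_subset[OF continuous_on_levy_density]) auto

lemma levy_mass_nonneg: "0 \<le> levy_mass a e"
  unfolding levy_mass_def set_lebesgue_integral_def
  by (intro Bochner_Integration.integral_nonneg) (simp add: levy_density_nonneg)

lemma power_mult_levy_density:
  assumes "0 < x"
  shows "(l * x) ^ k * levy_density a x = l ^ k * x powr (real k - a - 1)"
  using assms
  by (simp add: levy_density_def power_mult_distrib powr_diff powr_add powr_realpow divide_inverse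
      flip: powr_minus)

lemma set_integrable_powr_Icc0:
  fixes p :: real
  assumes "-1 < p"
  shows "set_integrable lborel {0..1} (\<lambda>x::real. x powr p)"
proof -
  have "(\<lambda>x::real. x powr p) integrable_on {0..1}"
    using assms by (intro integrable_on_powr_from_0) auto
  then have "(\<lambda>x::real. x powr p) absolutely_integrable_on {0..1}"
    by (subst absolutely_integrable_on_iff_nonneg) auto
  then show ?thesis
    unfolding set_integrable_def by (subst (asm) integrable_completion) auto
qed

lemma set_integral_powr_Icc_le:
  fixes p e :: real
  assumes "-1 < p" "0 < e"
  shows "(LBINT x:{e..1}. x powr p) \<le> 1 / (p + 1)"
proof -
  have "((\<lambda>x::real. x powr p) has_integral (1 / (p + 1))) {0..1}"
    using has_integral_powr_from_0[of p 1] assms by simp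
  then have "(LBINT x:{0..1}. x powr p) = 1 / (p + 1)"
    using set_borel_integral_eq_integral(2)[OF set_integrable_powr_Icc0[OF assms(1)]]
    by (simp add: integral_unique)
  moreover have "(LBINT x:{e..1}. x powr p) \<le> (LBINT x:{0..1}. x powr p)"
  proof -
    have "set_integrable lborel {e..1} (\<lambda>x. x powr p)"
      using assms by (intro set_integrable_subset[OF set_integrable_powr_Icc0]) auto
    then show ?thesis
      using set_integrable_powr_Icc0[OF assms(1)] assms(2)
      unfolding set_lebesgue_integral_def set_integrable_def
      by (intro integral_mono) (auto simp: indicator_def)
  qed
  ultimately show ?thesis
    by simp
qed

section \<open>Compound Poisson approximation\<close>

text \<open>The law of one jump is the image of \<open>jump_density\<close> under \<open>jump_value\<close>: the uniform
  part on \<open>[0, e)\<close> carries the atom of mass \<open>1 - levy_mass a e / n\<close> at \<open>0\<close>.\<close>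

definition jump_density :: "real \<Rightarrow> real \<Rightarrow> nat \<Rightarrow> real \<Rightarrow> real" where
  "jump_density a e n x =
     indicator {0..<e} x * ((1 - levy_mass a e / n) / e) + indicator {e..1} x * (levy_density a x / n)"

definition jump_value :: "real \<Rightarrow> real \<Rightarrow> nat \<Rightarrow> real \<Rightarrow> real" where
  "jump_value a e n x = (if x < e then 0 else x) - levy_drift a e / n"

definition jump_distr :: "real \<Rightarrow> real \<Rightarrow> nat \<Rightarrow> real measure" where
  "jump_distr a e n = distr (density lborel (\<lambda>x. ennreal (jump_density a e n x))) borel (jump_value a e n)"

definition jump_sum_distr :: "real \<Rightarrow> real \<Rightarrow> nat \<Rightarrow> real measure" where
  "jump_sum_distr a e n = distr (Pi\<^sub>M {..<n} (\<lambda>_. jump_distr a e n)) borel (\<lambda>\<omega>. \<Sum>i<n. \<omega> i)"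

lemma jump_density_nonneg:
  assumes "0 < e" "levy_mass a e \<le> n"
  shows "0 \<le> jump_density a e n x"
proof -
  have "levy_mass a e / n \<le> 1"
    using assms by (cases "n = 0") (auto simp: field_simps)
  then show ?thesis
    unfolding jump_density_def using assms levy_density_nonneg[of a x]
    by (intro add_nonneg_nonneg mult_nonneg_nonneg) auto
qed

lemma jump_density_measurable [measurable]: "jump_density a e n \<in> borel_measurable borel"
  unfolding jump_density_def by measurable

lemma jump_value_measurable [measurable]: "jump_value a e n \<in> borel_measurable borel"
  unfolding jump_value_def by measurable

lemma sets_jump_distr [measurable_cong]: "sets (jump_distr a e n) = sets borel"
  by (simp add: jump_distr_def)

lemma integral_jump_density:
  fixes a :: real and f :: "real \<Rightarrow> 'b::{banach, second_countable_topology}"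
  assumes e: "0 < e" "e \<le> 1" and n: "0 < n" and f: "continuous_on UNIV f"
  defines "D \<equiv> levy_drift a e / n"
  shows "integrable lborel (\<lambda>x. jump_density a e n x *\<^sub>R f (jump_value a e n x))"
    and "(\<integral>x. jump_density a e n x *\<^sub>R f (jump_value a e n x) \<partial>lborel) =
         (1 - levy_mass a e / n) *\<^sub>R f (- D) + (1 / n) *\<^sub>R (LBINT x:{e..1}. levy_density a x *\<^sub>R f (x - D))"
proof -
  define c where "c = (1 - levy_mass a e / n) / e"
  have split: "jump_density a e n x *\<^sub>R f (jump_value a e n x) =
      indicator {0..<e} x *\<^sub>R (c *\<^sub>R f (- D)) +
      indicator {e..1} x *\<^sub>R ((1 / n) *\<^sub>R (levy_density a x *\<^sub>R f (x - D)))" for x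
    by (auto simp: jump_density_def jump_value_def c_def D_def indicator_def)
  have atom: "integrable lborel (\<lambda>x. indicator {0..<e} x *\<^sub>R (c *\<^sub>R f (- D)))"
    using e by (intro integrable_scaleR_left integrable_real_indicator) (auto simp: ennreal_less_top)
  have "set_integrable lborel {e..1} (\<lambda>x. levy_density a x *\<^sub>R f (x - D))"
    using e by (intro set_integrable_levy_density_mult continuous_on_compose2[OF f] continuous_intros) auto
  then have jumps: "integrable lborel (\<lambda>x. indicator {e..1} x *\<^sub>R ((1 / n) *\<^sub>R (levy_density a x *\<^sub>R f (x - D))))"
    unfolding set_integrable_def
    by (subst scaleR_left_commute) (rule integrable_scaleR_right)
  show "integrable lborel (\<lambda>x. jump_density a e n x *\<^sub>R f (jump_value a e n x))"
    unfolding split using atom jumps by (rule Bochner_Integration.integrable_add)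
  have "(\<integral>x. jump_density a e n x *\<^sub>R f (jump_value a e n x) \<partial>lborel) =
      e *\<^sub>R (c *\<^sub>R f (- D)) + (1 / n) *\<^sub>R (LBINT x:{e..1}. levy_density a x *\<^sub>R f (x - D))"
    unfolding split Bochner_Integration.integral_add[OF atom jumps] set_lebesgue_integral_def
    using e by (simp flip: integral_scaleR_right add: scaleR_scaleR mult.commute)
  then show "(\<integral>x. jump_density a e n x *\<^sub>R f (jump_value a e n x) \<partial>lborel) =
      (1 - levy_mass a e / n) *\<^sub>R f (- D) + (1 / n) *\<^sub>R (LBINT x:{e..1}. levy_density a x *\<^sub>R f (x - D))"
    using e by (simp add: c_def)
qed

lemma
  fixes a :: real and f :: "real \<Rightarrow> 'b::{banach, second_countable_topology}"
  assumes e: "0 < e" "e \<le> 1" and n: "0 < n" "levy_mass a e \<le> n" and f: "continuous_on UNIV f"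
  defines "D \<equiv> levy_drift a e / n"
  shows integrable_jump_distr: "integrable (jump_distr a e n) f"
    and integral_jump_distr: "(\<integral>x. f x \<partial>jump_distr a e n) =
         (1 - levy_mass a e / n) *\<^sub>R f (- D) + (1 / n) *\<^sub>R (LBINT x:{e..1}. levy_density a x *\<^sub>R f (x - D))"
proof -
  have [measurable]: "f \<in> borel_measurable borel"
    using f by (rule borel_measurable_continuous_onI)
  have nonneg: "AE x in lborel. 0 \<le> jump_density a e n x"
    using jump_density_nonneg[OF e(1) n(2)] by simp
  have "(\<integral>x. f x \<partial>jump_distr a e n) = (\<integral>x. jump_density a e n x *\<^sub>R f (jump_value a e n x) \<partial>lborel)"
    unfolding jump_distr_def using nonneg by (simp add: integral_distr integral_density)
  then show "(\<integral>x. f x \<partial>jump_distr a e n) =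
      (1 - levy_mass a e / n) *\<^sub>R f (- D) + (1 / n) *\<^sub>R (LBINT x:{e..1}. levy_density a x *\<^sub>R f (x - D))"
    using integral_jump_density(2)[OF e n(1) f] by (simp add: D_def)
  show "integrable (jump_distr a e n) f"
    unfolding jump_distr_def using nonneg integral_jump_density(1)[OF e n(1) f]
    by (simp add: integrable_distr_eq integrable_density)
qed

lemma prob_space_jump_distr:
  assumes "0 < e" "e \<le> 1" "0 < n" "levy_mass a e \<le> n"
  shows "prob_space (jump_distr a e n)"
proof
  let ?M = "jump_distr a e n"
  have "measure ?M (space ?M) = 1"
    using integral_jump_distr[OF assms, of "\<lambda>_. 1::real"] assms by (simp add: levy_mass_def)
  moreover have "emeasure ?M (space ?M) < \<infinity>"
    using integrable_jump_distr[OF assms, of "\<lambda>_. 1::real"] by (simp add: integrable_iff_bounded)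
  ultimately show "emeasure ?M (space ?M) = 1"
    by (simp add: emeasure_eq_ennreal_measure)
qed

lemma real_distribution_jump_distr:
  assumes "0 < e" "e \<le> 1" "0 < n" "levy_mass a e \<le> n"
  shows "real_distribution (jump_distr a e n)"
  using prob_space_jump_distr[OF assms] by (simp add: real_distribution_def real_distribution_axioms_def sets_jump_distr)

lemma integral_jump_distr_multiplicative:
  fixes g :: "real \<Rightarrow> 'b::{real_normed_field, banach, second_countable_topology}"
  assumes e: "0 < e" "e \<le> 1" and n: "0 < n" "levy_mass a e \<le> n"
    and g: "continuous_on UNIV g" and g_add: "\<And>x y. g (x + y) = g x * g y"
  shows "(\<integral>x. g x \<partial>jump_distr a e n) =
    g (- levy_drift a e / n) *
      (1 + (1 / n) *\<^sub>R ((LBINT x:{e..1}. levy_density a x *\<^sub>R g x) - levy_mass a e *\<^sub>R 1))"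
proof -
  define c where "c = g (- levy_drift a e / n)"
  define K where "K = (LBINT x:{e..1}. levy_density a x *\<^sub>R g x)"
  have shift: "(LBINT x:{e..1}. levy_density a x *\<^sub>R g (x - levy_drift a e / n)) = K * c"
    unfolding K_def c_def using g_add[of _ "- levy_drift a e / n"]
    by (simp add: set_integral_mult_left[symmetric] scaleR_left_commute)
  have "(\<integral>x. g x \<partial>jump_distr a e n) = (1 - levy_mass a e / n) *\<^sub>R c + (1 / n) *\<^sub>R (K * c)"
    using integral_jump_distr[OF e n g] shift by (simp add: c_def)
  also have "\<dots> = c * (1 + (1 / n) *\<^sub>R (K - levy_mass a e *\<^sub>R 1))"
    by (simp add: algebra_simps scaleR_conv_of_real)
  finally show ?thesis
    by (simp only: K_def c_def)
qed

lemma product_prob_space_jump_distr: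
  assumes "0 < e" "e \<le> 1" "0 < n" "levy_mass a e \<le> n"
  shows "product_prob_space (\<lambda>_. jump_distr a e n)"
  using prob_space_jump_distr[OF assms]
  by (simp add: product_prob_space_def product_sigma_finite_def prob_space_imp_sigma_finite
      product_prob_space_axioms_def)

lemma real_distribution_jump_sum_distr:
  assumes "0 < e" "e \<le> 1" "0 < n" "levy_mass a e \<le> n"
  shows "real_distribution (jump_sum_distr a e n)"
proof -
  interpret prob_space "Pi\<^sub>M {..<n} (\<lambda>_. jump_distr a e n)"
    using prob_space_jump_distr[OF assms] by (intro prob_space_PiM) auto
  show ?thesis
    unfolding jump_sum_distr_def by (rule real_distribution_distr) measurable
qed

lemma
  fixes g :: "real \<Rightarrow> 'b::{real_normed_field, banach, second_countable_topology}"
  assumes e: "0 < e" "e \<le> 1" and n: "0 < n" "levy_mass a e \<le> n"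
    and g: "continuous_on UNIV g" and g_add: "\<And>x y. g (x + y) = g x * g y" and g0: "g 0 = 1"
  shows integrable_jump_sum_distr_multiplicative: "integrable (jump_sum_distr a e n) g"
    and integral_jump_sum_distr_multiplicative:
      "(\<integral>x. g x \<partial>jump_sum_distr a e n) = (\<integral>x. g x \<partial>jump_distr a e n) ^ n"
proof -
  interpret product_prob_space "\<lambda>_. jump_distr a e n"
    using product_prob_space_jump_distr[OF e n] .
  have [measurable]: "g \<in> borel_measurable borel"
    using g by (rule borel_measurable_continuous_onI)
  have g_sum: "g (\<Sum>i<n. \<omega> i) = (\<Prod>i<n. g (\<omega> i))" for \<omega> :: "nat \<Rightarrow> real"
    by (induction n) (simp_all add: g0 g_add)
  have int: "integrable (jump_distr a e n) g"
    using integrable_jump_distr[OF e n g] .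
  have "integrable (Pi\<^sub>M {..<n} (\<lambda>_. jump_distr a e n)) (\<lambda>\<omega>. \<Prod>i<n. g (\<omega> i))"
    using int by (intro product_integrable_prod) auto
  then show "integrable (jump_sum_distr a e n) g"
    unfolding jump_sum_distr_def by (simp add: integrable_distr_eq g_sum)
  have "(\<integral>x. g x \<partial>jump_sum_distr a e n) = (\<integral>\<omega>. (\<Prod>i<n. g (\<omega> i)) \<partial>Pi\<^sub>M {..<n} (\<lambda>_. jump_distr a e n))"
    unfolding jump_sum_distr_def by (simp add: integral_distr g_sum)
  also have "\<dots> = (\<Prod>i<n. \<integral>x. g x \<partial>jump_distr a e n)"
    using int by (intro product_integral_prod) auto
  finally show "(\<integral>x. g x \<partial>jump_sum_distr a e n) = (\<integral>x. g x \<partial>jump_distr a e n) ^ n"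
    by simp
qed

definition approx_steps :: "real \<Rightarrow> nat \<Rightarrow> nat" where
  "approx_steps a m = nat \<lceil>real (Suc m) * (levy_mass a (1 / Suc m) + 1)\<^sup>2\<rceil>"

definition levy_approx :: "real \<Rightarrow> nat \<Rightarrow> real measure" where
  "levy_approx a m = jump_sum_distr a (1 / Suc m) (approx_steps a m)"

lemma approx_steps_bounds:
  fixes a :: real and m :: nat and L :: real
  defines "L \<equiv> levy_mass a (1 / Suc m)"
  shows "0 < approx_steps a m" and "L \<le> approx_steps a m"
    and "4 * L\<^sup>2 / approx_steps a m \<le> 4 / Suc m"
proof -
  have L: "0 \<le> L"
    unfolding L_def by (rule levy_mass_nonneg)
  define N where "N = real (Suc m) * (L + 1)\<^sup>2"
  have N: "N \<le> approx_steps a m"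
    unfolding N_def L_def approx_steps_def by linarith
  have "L + 1 \<le> (L + 1)\<^sup>2"
    using L by (simp add: power2_eq_square)
  also have "\<dots> \<le> N"
    unfolding N_def using mult_right_mono[of 1 "real (Suc m)" "(L + 1)\<^sup>2"] by simp
  finally have "L < approx_steps a m"
    using N by linarith
  then show "0 < approx_steps a m" "L \<le> approx_steps a m"
    using L by linarith+
  have "L\<^sup>2 \<le> (L + 1)\<^sup>2"
    using L by (intro power_mono) auto
  then have "4 * L\<^sup>2 / approx_steps a m \<le> 4 * (L + 1)\<^sup>2 / N"
    using N L \<open>L < approx_steps a m\<close> by (intro frac_le) (auto simp: N_def)
  also have "\<dots> = 4 / Suc m"
    using L by (simp add: N_def)
  finally show "4 * L\<^sup>2 / approx_steps a m \<le> 4 / Suc m" .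
qed

lemma real_distribution_levy_approx: "real_distribution (levy_approx a m)"
  unfolding levy_approx_def by (intro real_distribution_jump_sum_distr approx_steps_bounds) auto

section \<open>Convergence of characteristic functions\<close>

definition levy_exponent_integrand :: "real \<Rightarrow> real \<Rightarrow> real \<Rightarrow> complex" where
  "levy_exponent_integrand a t x =
     (iexp (t * x) - 1 - \<i> * complex_of_real (t * x)) * complex_of_real (levy_density a x)"

lemma levy_exponent_integrand_measurable [measurable]:
  "levy_exponent_integrand a t \<in> borel_measurable borel"
  unfolding levy_exponent_integrand_def by measurable

lemma norm_levy_exponent_integrand_le:
  assumes "0 < x"
  shows "norm (levy_exponent_integrand a t x) \<le> t\<^sup>2 / 2 * x powr (1 - a)"
proof -
  have "norm (iexp (t * x) - 1 - \<i> * complex_of_real (t * x)) \<le> (t * x)\<^sup>2 / 2"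
    using iexp_approx1[of "t * x" 1] by (simp add: algebra_simps power2_eq_square)
  then have "norm (levy_exponent_integrand a t x) \<le> (t * x)\<^sup>2 / 2 * levy_density a x"
    unfolding levy_exponent_integrand_def norm_mult norm_of_real abs_of_nonneg[OF levy_density_nonneg]
    by (rule mult_right_mono) (simp_all add: levy_density_nonneg)
  also have "\<dots> = t\<^sup>2 / 2 * x powr (1 - a)"
    using power_mult_levy_density[OF assms, of t 2 a] by simp
  finally show ?thesis .
qed

lemma set_integrable_levy_exponent_integrand:
  assumes "a < 2"
  shows "set_integrable lborel {0<..1} (levy_exponent_integrand a t)"
  unfolding set_integrable_def
proof (rule Bochner_Integration.integrable_bound[OF _ _ AE_I2])
  have "set_integrable lborel {0<..1} (\<lambda>x. t\<^sup>2 / 2 * x powr (1 - a))"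
    using assms by (intro set_integrable_mult_right set_integrable_subset[OF set_integrable_powr_Icc0]) auto
  then show "integrable lborel (\<lambda>x. indicator {0<..1} x *\<^sub>R (t\<^sup>2 / 2 * x powr (1 - a)))"
    by (simp add: set_integrable_def)
  show "norm (indicator {0<..1} x *\<^sub>R levy_exponent_integrand a t x)
      \<le> norm (indicator {0<..1} x *\<^sub>R (t\<^sup>2 / 2 * x powr (1 - a)))" for x
    using norm_levy_exponent_integrand_le[of x a t] by (auto simp: indicator_def)
qed auto

lemma set_integral_levy_exponent_integrand:
  assumes "0 < e"
  shows "(CLBINT x:{e..1}. levy_exponent_integrand a t x) =
    (CLBINT x:{e..1}. levy_density a x *\<^sub>R iexp (t * x)) - of_real (levy_mass a e)
      - \<i> * of_real (t * levy_drift a e)"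
proof -
  have int: "set_integrable lborel {e..1} (\<lambda>x. levy_density a x *\<^sub>R f x)"
    if "continuous_on UNIV f" for f :: "real \<Rightarrow> complex"
    using assms by (intro set_integrable_levy_density_mult continuous_on_subset[OF that]) auto
  have "(CLBINT x:{e..1}. levy_density a x *\<^sub>R (1::complex)) = of_real (levy_mass a e)"
    by (simp add: levy_mass_def scaleR_conv_of_real set_integral_complex_of_real)
  moreover have "(CLBINT x:{e..1}. levy_density a x *\<^sub>R (\<i> * of_real (t * x))) = \<i> * of_real (t * levy_drift a e)"
  proof -
    have "(CLBINT x:{e..1}. levy_density a x *\<^sub>R (\<i> * of_real (t * x))) =
        (CLBINT x:{e..1}. (\<i> * of_real t) * of_real (x * levy_density a x))"
      by (simp add: scaleR_conv_of_real mult_ac)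
    then show ?thesis
      by (simp del: of_real_mult add: levy_drift_def set_integral_complex_of_real) simp
  qed
  moreover have "(CLBINT x:{e..1}. levy_exponent_integrand a t x) =
      (CLBINT x:{e..1}. levy_density a x *\<^sub>R iexp (t * x) - levy_density a x *\<^sub>R 1
         - levy_density a x *\<^sub>R (\<i> * of_real (t * x)))"
    by (intro set_lebesgue_integral_cong) (auto simp: levy_exponent_integrand_def scaleR_conv_of_real algebra_simps)
  moreover have "set_integrable lborel {e..1} (\<lambda>x. levy_density a x *\<^sub>R iexp (t * x))"
    "set_integrable lborel {e..1} (\<lambda>x. levy_density a x *\<^sub>R (1::complex))"
    "set_integrable lborel {e..1} (\<lambda>x. levy_density a x *\<^sub>R (\<i> * of_real (t * x)))"
    using int by (simp_all add: continuous_intros)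
  ultimately show ?thesis
    by (simp add: set_integral_diff)
qed

lemma char_jump_distr:
  assumes e: "0 < e" "e \<le> 1" and n: "0 < n" "levy_mass a e \<le> n"
  shows "char (jump_distr a e n) t = iexp (- (t * levy_drift a e / n)) *
    (1 + ((CLBINT x:{e..1}. levy_density a x *\<^sub>R iexp (t * x)) - of_real (levy_mass a e)) / n)"
  unfolding char_def
  by (subst integral_jump_distr_multiplicative[OF e n])
     (auto intro!: continuous_intros simp: distrib_left exp_add scaleR_conv_of_real divide_inverse mult_ac)

lemma char_jump_sum_distr:
  assumes "0 < e" "e \<le> 1" "0 < n" "levy_mass a e \<le> n"
  shows "char (jump_sum_distr a e n) t = char (jump_distr a e n) t ^ n"
  unfolding char_def
  by (rule integral_jump_sum_distr_multiplicative[OF assms])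
     (auto intro!: continuous_intros simp: distrib_left exp_add)

lemma norm_char_jump_sum_distr_diff_le:
  assumes e: "0 < e" "e \<le> 1" and n: "0 < n" "levy_mass a e \<le> n"
  shows "norm (char (jump_sum_distr a e n) t - exp (CLBINT x:{e..1}. levy_exponent_integrand a t x))
           \<le> 4 * (levy_mass a e)\<^sup>2 / n"
proof -
  define L where "L = levy_mass a e"
  define K where "K = (CLBINT x:{e..1}. levy_density a x *\<^sub>R iexp (t * x))"
  define w where "w = (K - of_real L) / n"
  define c where "c = iexp (- (t * levy_drift a e / n))"
  have char_rho: "char (jump_distr a e n) t = c * (1 + w)"
    using char_jump_distr[OF e n] by (simp add: c_def w_def K_def L_def)
  have "(CLBINT x:{e..1}. levy_exponent_integrand a t x) = of_nat n * (w - \<i> * of_real (t * levy_drift a e / n))"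
    using n by (simp add: set_integral_levy_exponent_integrand[OF e(1)] w_def K_def L_def field_simps)
  then have exp_eq: "exp (CLBINT x:{e..1}. levy_exponent_integrand a t x) = (c * exp w) ^ n"
    by (simp only: exp_of_nat_mult) (simp add: c_def exp_diff exp_minus field_simps)
  have "norm K \<le> L"
    using set_integral_norm_bound[of lborel "{e..1}" "\<lambda>x. levy_density a x *\<^sub>R iexp (t * x)"] e
    by (simp add: K_def L_def levy_mass_def levy_density_nonneg set_integrable_levy_density_mult continuous_intros)
  then have "Re w \<le> 0" and norm_w: "norm w \<le> 2 * L / n"
    using n complex_Re_le_cmod[of K] norm_triangle_ineq4[of K "of_real L"] levy_mass_nonneg[of a e]
    by (auto simp: w_def L_def norm_divide Re_divide_of_nat divide_right_mono divide_nonpos_pos)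
  have "norm (c * (1 + w)) \<le> 1"
    using real_distribution.cmod_char_le_1[OF real_distribution_jump_distr[OF e n], of t]
    by (simp only: char_rho)
  moreover have "norm (c * exp w) \<le> 1"
    using \<open>Re w \<le> 0\<close> by (simp add: c_def norm_mult)
  ultimately have "norm (char (jump_sum_distr a e n) t - exp (CLBINT x:{e..1}. levy_exponent_integrand a t x))
      \<le> n * norm (c * (1 + w) - c * exp w)"
    unfolding char_jump_sum_distr[OF e n] char_rho exp_eq by (rule norm_power_diff)
  also have "\<dots> = n * norm (exp w - 1 - w)"
  proof -
    have "c * (1 + w) - c * exp w = - c * (exp w - 1 - w)"
      by (simp add: algebra_simps)
    moreover have "norm c = 1"
      by (simp add: c_def)
    ultimately show ?thesis
      by (simp only: norm_mult norm_minus_cancel mult_1)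
  qed
  also have "\<dots> \<le> n * (2 * L / n) ^ 2"
    using order_trans[OF norm_exp_minus_one_minus_le[OF \<open>Re w \<le> 0\<close>] power_mono[OF norm_w norm_ge_zero]]
    by (intro mult_left_mono) auto
  also have "\<dots> = 4 * L\<^sup>2 / n"
    using n by (simp add: power_divide power_mult_distrib power2_eq_square)
  finally show ?thesis
    by (simp only: L_def)
qed

lemma tendsto_set_integral_Icc_Ioc:
  fixes f :: "real \<Rightarrow> 'b::{banach, second_countable_topology}"
  assumes "set_integrable lborel {0<..1} f"
  shows "(\<lambda>m. LBINT x:{1 / real (Suc m)..1}. f x) \<longlonglongrightarrow> (LBINT x:{0<..1}. f x)"
proof -
  have "(\<Union>m. {1 / real (Suc m)..1}) = {0<..1::real}"
  proof (intro equalityI subsetI)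
    fix x :: real assume "x \<in> {0<..1}"
    then obtain m where "inverse (real (Suc m)) < x"
      using reals_Archimedean by auto
    with \<open>x \<in> {0<..1}\<close> show "x \<in> (\<Union>m. {1 / real (Suc m)..1})"
      by (auto simp: inverse_eq_divide intro!: less_imp_le)
  next
    fix x assume "x \<in> (\<Union>m. {1 / real (Suc m)..1})"
    then obtain m where "1 / real (Suc m) \<le> x" "x \<le> 1"
      by auto
    then show "x \<in> {0<..1}"
      using less_le_trans[of 0 "1 / real (Suc m)" x] by auto
  qed
  moreover have "incseq (\<lambda>m. {1 / real (Suc m)..1})"
  proof (rule incseq_SucI)
    fix m
    have "1 / real (Suc (Suc m)) \<le> 1 / real (Suc m)"
      by (intro divide_left_mono) auto
    then show "{1 / real (Suc m)..1} \<subseteq> {1 / real (Suc (Suc m))..1}"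
      by auto
  qed
  ultimately show ?thesis
    using set_integral_cont_up[of "\<lambda>m. {1 / real (Suc m)..1}" lborel f] assms by simp
qed

lemma char_levy_approx_tendsto:
  assumes "a < 2" and char: "char \<mu> t = exp (CLBINT x:{0<..1}. levy_exponent_integrand a t x)"
  shows "(\<lambda>m. char (levy_approx a m) t) \<longlonglongrightarrow> char \<mu> t"
proof -
  define Z where "Z m = exp (CLBINT x:{1 / real (Suc m)..1}. levy_exponent_integrand a t x)" for m
  have "Z \<longlonglongrightarrow> char \<mu> t"
    unfolding Z_def char
    by (intro tendsto_exp tendsto_set_integral_Icc_Ioc set_integrable_levy_exponent_integrand assms)
  moreover have "(\<lambda>m. char (levy_approx a m) t - Z m) \<longlonglongrightarrow> 0"
  proof (rule Lim_null_comparison)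
    show "\<forall>\<^sub>F m in sequentially. norm (char (levy_approx a m) t - Z m) \<le> 4 / real (Suc m)"
    proof (intro always_eventually allI)
      fix m
      show "norm (char (levy_approx a m) t - Z m) \<le> 4 / real (Suc m)"
        unfolding levy_approx_def Z_def
        by (rule order_trans[OF norm_char_jump_sum_distr_diff_le[OF _ _ approx_steps_bounds(1,2)] approx_steps_bounds(3)])
           auto
    qed
    show "(\<lambda>m. 4 / real (Suc m)) \<longlonglongrightarrow> 0"
      using tendsto_mult_right_zero[OF LIMSEQ_inverse_real_of_nat, of 4] by (simp add: divide_inverse)
  qed
  ultimately show ?thesis
    using tendsto_add by fastforce
qed

section \<open>Chernoff bounds\<close>

definition truncated_cumulant :: "real \<Rightarrow> real \<Rightarrow> real \<Rightarrow> real" where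
  "truncated_cumulant a e l = (LBINT x:{e..1}. (exp (l * x) - 1 - l * x) * levy_density a x)"

lemma
  assumes e: "0 < e" "e \<le> 1" and n: "0 < n" "levy_mass a e \<le> n"
  shows integrable_exp_jump_sum_distr: "integrable (jump_sum_distr a e n) (\<lambda>x. exp (l * x))"
    and integral_exp_jump_sum_distr_le:
      "(\<integral>x. exp (l * x) \<partial>jump_sum_distr a e n) \<le> exp (truncated_cumulant a e l)"
proof -
  define L where "L = levy_mass a e"
  define K where "K = (LBINT x:{e..1}. levy_density a x * exp (l * x))"
  define c where "c = exp (- (l * levy_drift a e / n))"
  have g: "continuous_on UNIV (\<lambda>x. exp (l * x))" "\<And>x y. exp (l * (x + y)) = exp (l * x) * exp (l * y)"
    by (auto intro!: continuous_intros simp: distrib_left exp_add)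
  show "integrable (jump_sum_distr a e n) (\<lambda>x. exp (l * x))"
    using integrable_jump_sum_distr_multiplicative[OF e n g] by simp
  have int: "set_integrable lborel {e..1} (\<lambda>x. levy_density a x *\<^sub>R f x)"
    if "continuous_on UNIV f" for f :: "real \<Rightarrow> real"
    using e by (intro set_integrable_levy_density_mult continuous_on_subset[OF that]) auto
  have "truncated_cumulant a e l =
      (LBINT x:{e..1}. levy_density a x * exp (l * x) - levy_density a x - l * (x * levy_density a x))"
    unfolding truncated_cumulant_def by (intro set_lebesgue_integral_cong) (auto simp: algebra_simps)
  also have "\<dots> = K - L - l * levy_drift a e"
  proof -
    have "set_integrable lborel {e..1} (\<lambda>x. levy_density a x * exp (l * x))"
      "set_integrable lborel {e..1} (levy_density a)"
      "set_integrable lborel {e..1} (\<lambda>x. l * (x * levy_density a x))"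
      using int[OF g(1)] int[of "\<lambda>_. 1"] int[of "\<lambda>x. l * x", OF continuous_on_mult_left[OF continuous_on_id]]
      by (simp_all add: mult_ac)
    then show ?thesis
      by (simp add: set_integral_diff K_def L_def levy_mass_def levy_drift_def)
  qed
  finally have cumulant: "truncated_cumulant a e l = K - L - l * levy_drift a e" .
  have "(\<integral>x. exp (l * x) \<partial>jump_distr a e n) = c * (1 + (K - L) / n)"
    unfolding integral_jump_distr_multiplicative[OF e n g]
    by (simp add: c_def K_def L_def field_simps)
  also have "\<dots> \<le> c * exp ((K - L) / n)"
    by (intro mult_left_mono exp_ge_add_one_self) (simp add: c_def)
  finally have "(\<integral>x. exp (l * x) \<partial>jump_distr a e n) ^ n \<le> (c * exp ((K - L) / n)) ^ n"
    by (intro power_mono integral_nonneg_AE) auto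
  also have "\<dots> = exp (truncated_cumulant a e l)"
    using n by (simp add: cumulant c_def field_simps flip: exp_add exp_of_nat_mult)
  finally show "(\<integral>x. exp (l * x) \<partial>jump_sum_distr a e n) \<le> exp (truncated_cumulant a e l)"
    using integral_jump_sum_distr_multiplicative[OF e n g] by simp
qed

lemma chernoff_bound_weak_limit:
  fixes \<mu> :: "real measure" and \<nu> :: "nat \<Rightarrow> real measure"
  assumes \<mu>: "real_distribution \<mu>" and \<nu>: "\<And>m. real_distribution (\<nu> m)" and conv: "weak_conv_m \<nu> \<mu>"
    and int: "\<And>m. integrable (\<nu> m) (\<lambda>x. exp (l * x))"
    and mgf: "\<And>m. (\<integral>x. exp (l * x) \<partial>\<nu> m) \<le> exp B"
  shows "measure \<mu> {x. s \<le> l * x} \<le> exp (B - s)"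
proof -
  interpret \<mu>: real_distribution \<mu> by (rule \<mu>)
  txt \<open>\<open>h\<close> is a bounded continuous function between the indicator of \<open>{x. s \<le> l * x}\<close> and
    \<open>exp (l * x - s)\<close>, so weak convergence carries the bound over to the limit.\<close>
  define h where "h x = min 1 (exp (l * x - s))" for x
  have h_bounded: "integrable M h" if "real_distribution M" for M
  proof -
    interpret real_distribution M by (rule that)
    show ?thesis
      unfolding h_def by (intro integrable_const_bound[where B = 1] AE_I2) auto
  qed
  have "integral\<^sup>L (\<nu> m) h \<le> exp (B - s)" for m
  proof -
    have "integral\<^sup>L (\<nu> m) h \<le> (\<integral>x. exp (- s) * exp (l * x) \<partial>\<nu> m)"
      using h_bounded[OF \<nu>] int
      by (intro integral_mono) (auto simp: h_def exp_diff exp_minus divide_inverse mult.commute)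
    also have "\<dots> \<le> exp (- s) * exp B"
      using mgf[of m] by simp
    finally show ?thesis
      by (simp add: exp_diff exp_minus divide_inverse mult.commute)
  qed
  moreover have "(\<lambda>m. integral\<^sup>L (\<nu> m) h) \<longlonglongrightarrow> integral\<^sup>L \<mu> h"
    unfolding h_def
    by (intro weak_conv_imp_integral_bdd_continuous_conv[OF \<nu> \<mu> conv, where B = 1] continuous_intros)
       auto
  ultimately have "integral\<^sup>L \<mu> h \<le> exp (B - s)"
    by (intro LIMSEQ_le_const2) auto
  moreover have "measure \<mu> {x. s \<le> l * x} \<le> integral\<^sup>L \<mu> h"
  proof -
    have "measure \<mu> {x. s \<le> l * x} = (\<integral>x. indicator {x. s \<le> l * x} x \<partial>\<mu>)"
      by (simp add: \<mu>.events_eq_borel)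
    also have "\<dots> \<le> integral\<^sup>L \<mu> h"
      using h_bounded[OF \<mu>]
      by (intro integral_mono integrable_real_indicator)
         (auto simp: \<mu>.events_eq_borel \<mu>.emeasure_eq_measure indicator_def h_def)
    finally show ?thesis .
  qed
  ultimately show ?thesis
    by linarith
qed

lemma levy_tail_le_exp:
  assumes \<mu>: "real_distribution \<mu>" and "a < 2"
    and char: "\<And>t. char \<mu> t = exp (CLBINT x:{0<..1}. levy_exponent_integrand a t x)"
    and cumulant: "\<And>e. 0 < e \<Longrightarrow> e \<le> 1 \<Longrightarrow> truncated_cumulant a e l \<le> B"
  shows "measure \<mu> {x. s \<le> l * x} \<le> exp (B - s)"
proof (rule chernoff_bound_weak_limit[OF \<mu> real_distribution_levy_approx])
  show "weak_conv_m (levy_approx a) \<mu>"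
    using char_levy_approx_tendsto[OF \<open>a < 2\<close> char]
    by (intro levy_continuity[OF real_distribution_levy_approx \<mu>])
  show "integrable (levy_approx a m) (\<lambda>x. exp (l * x))" for m
    unfolding levy_approx_def by (intro integrable_exp_jump_sum_distr approx_steps_bounds) auto
  show "(\<integral>x. exp (l * x) \<partial>levy_approx a m) \<le> exp B" for m
    unfolding levy_approx_def
    by (rule order_trans[OF integral_exp_jump_sum_distr_le[OF _ _ approx_steps_bounds(1,2)]])
       (auto intro: cumulant)
qed

lemma truncated_cumulant_le_of_nonpos:
  assumes "a < 2" "0 < e" "l \<le> 0"
  shows "truncated_cumulant a e l \<le> l\<^sup>2 / (2 * (2 - a))"
proof -
  have "truncated_cumulant a e l \<le> (LBINT x:{e..1}. l\<^sup>2 / 2 * x powr (1 - a))"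
    unfolding truncated_cumulant_def
  proof (rule set_integral_mono)
    show "set_integrable lborel {e..1} (\<lambda>x. (exp (l * x) - 1 - l * x) * levy_density a x)"
      using set_integrable_levy_density_mult[OF \<open>0 < e\<close>, of "\<lambda>x. exp (l * x) - 1 - l * x" a]
      by (simp add: mult.commute continuous_intros)
    show "set_integrable lborel {e..1} (\<lambda>x. l\<^sup>2 / 2 * x powr (1 - a))"
      using assms by (intro set_integrable_mult_right set_integrable_subset[OF set_integrable_powr_Icc0]) auto
    fix x assume "x \<in> {e..1}"
    then have "0 < x" using assms by auto
    then have "(exp (l * x) - 1 - l * x) * levy_density a x \<le> (l * x)\<^sup>2 / 2 * levy_density a x"
      using assms by (intro mult_right_mono exp_minus_one_minus_le_nonpos levy_density_nonneg)
        (simp add: mult_nonpos_nonneg)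
    then show "(exp (l * x) - 1 - l * x) * levy_density a x \<le> l\<^sup>2 / 2 * x powr (1 - a)"
      using power_mult_levy_density[OF \<open>0 < x\<close>, of l 2 a] by simp
  qed
  also have "\<dots> = l\<^sup>2 / 2 * (LBINT x:{e..1}. x powr (1 - a))"
    by simp
  also have "\<dots> \<le> l\<^sup>2 / 2 * (1 / (1 - a + 1))"
    using assms by (intro mult_left_mono set_integral_powr_Icc_le) auto
  finally show ?thesis
    by simp
qed

lemma truncated_cumulant_le:
  assumes "a < 2" "0 < e" "0 \<le> l" "l \<le> 1"
  shows "truncated_cumulant a e l \<le> l\<^sup>2 / (2 * (2 - a)) + 1 / 4"
proof -
  have int: "set_integrable lborel {e..1} (\<lambda>x. x powr p)" if "-1 < p" for p
    using that assms by (intro set_integrable_subset[OF set_integrable_powr_Icc0]) auto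
  have "truncated_cumulant a e l \<le>
      (LBINT x:{e..1}. l\<^sup>2 / 2 * x powr (1 - a) + l ^ 3 / 4 * x powr (2 - a))"
    unfolding truncated_cumulant_def
  proof (rule set_integral_mono)
    show "set_integrable lborel {e..1} (\<lambda>x. (exp (l * x) - 1 - l * x) * levy_density a x)"
      using set_integrable_levy_density_mult[OF \<open>0 < e\<close>, of "\<lambda>x. exp (l * x) - 1 - l * x" a]
      by (simp add: mult.commute continuous_intros)
    show "set_integrable lborel {e..1} (\<lambda>x. l\<^sup>2 / 2 * x powr (1 - a) + l ^ 3 / 4 * x powr (2 - a))"
      using assms by (intro set_integral_add set_integrable_mult_right int) auto
    fix x assume "x \<in> {e..1}"
    then have x: "0 < x" "x \<le> 1" using assms by auto
    then have "(exp (l * x) - 1 - l * x) * levy_density a x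
        \<le> ((l * x)\<^sup>2 / 2 + (l * x) ^ 3 / 4) * levy_density a x"
      using assms by (intro mult_right_mono exp_minus_one_minus_le_cubic levy_density_nonneg)
        (auto simp: mult_le_one)
    also have "\<dots> = (l * x)\<^sup>2 * levy_density a x / 2 + (l * x) ^ 3 * levy_density a x / 4"
      by (simp add: algebra_simps)
    finally show "(exp (l * x) - 1 - l * x) * levy_density a x
        \<le> l\<^sup>2 / 2 * x powr (1 - a) + l ^ 3 / 4 * x powr (2 - a)"
      using power_mult_levy_density[OF x(1), of l 2 a] power_mult_levy_density[OF x(1), of l 3 a]
      by simp
  qed
  also have "\<dots> = l\<^sup>2 / 2 * (LBINT x:{e..1}. x powr (1 - a)) + l ^ 3 / 4 * (LBINT x:{e..1}. x powr (2 - a))"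
    using int[of "1 - a"] int[of "2 - a"] assms
    by (simp add: set_integral_add set_integrable_mult_right)
  also have "\<dots> \<le> l\<^sup>2 / 2 * (1 / (2 - a)) + 1 / 4 * 1"
  proof -
    have nonneg: "0 \<le> (LBINT x:{e..1}. x powr p)" for p :: real
      unfolding set_lebesgue_integral_def by (intro Bochner_Integration.integral_nonneg) auto
    have "(LBINT x:{e..1}. x powr (2 - a)) \<le> 1"
      using set_integral_powr_Icc_le[of "2 - a" e] assms by (simp add: divide_le_eq_1 order_trans)
    then show ?thesis
      using set_integral_powr_Icc_le[of "1 - a" e] assms power_le_one[of l 3] nonneg
      by (intro add_mono mult_mono) auto
  qed
  finally show ?thesis
    by simp
qed

context
  fixes \<mu> :: "real measure" and a :: real
  assumes \<mu>: "real_distribution \<mu>" and a: "a < 2"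
    and char: "\<And>t. char \<mu> t = exp (CLBINT x:{0<..1}. levy_exponent_integrand a t x)"
begin

lemma levy_upper_tail:
  assumes y: "0 \<le> y" "y \<le> 1 / (2 - a)"
  shows "measure \<mu> {x. y \<le> x} \<le> exp (1/4) * exp (- (1/2) * (2 - a) * y\<^sup>2)"
proof -
  interpret real_distribution \<mu> by (rule \<mu>)
  define l where "l = (2 - a) * y"
  have "(2 - a) * y \<le> (2 - a) * (1 / (2 - a))"
    using y a by (intro mult_left_mono) auto
  then have l: "0 \<le> l" "l \<le> 1"
    using y a by (auto simp: l_def)
  have "measure \<mu> {x. y \<le> x} \<le> measure \<mu> {x. l * y \<le> l * x}"
    using l by (intro finite_measure_mono) (auto simp: mult_left_mono events_eq_borel)
  also have "\<dots> \<le> exp (l\<^sup>2 / (2 * (2 - a)) + 1 / 4 - l * y)"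
    using truncated_cumulant_le[OF a _ l] by (intro levy_tail_le_exp[OF \<mu> a char]) auto
  also have "\<dots> = exp (1/4) * exp (- (1/2) * (2 - a) * y\<^sup>2)"
    using a by (simp add: l_def power2_eq_square field_simps flip: exp_add)
  finally show ?thesis .
qed

lemma levy_lower_tail:
  assumes y: "0 \<le> y"
  shows "measure \<mu> {x. x \<le> - y} \<le> exp (- (1/2) * (2 - a) * y\<^sup>2)"
proof -
  interpret real_distribution \<mu> by (rule \<mu>)
  define l where "l = - (2 - a) * y"
  have l: "l \<le> 0"
    using y a by (simp add: l_def mult_nonpos_nonneg)
  have "measure \<mu> {x. x \<le> - y} \<le> measure \<mu> {x. (2 - a) * y\<^sup>2 \<le> l * x}"
  proof (intro finite_measure_mono subsetI)
    fix x assume "x \<in> {x. x \<le> - y}"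
    then have "((2 - a) * y) * y \<le> ((2 - a) * y) * (- x)"
      using a y by (intro mult_left_mono) auto
    then show "x \<in> {x. (2 - a) * y\<^sup>2 \<le> l * x}"
      by (simp add: l_def power2_eq_square algebra_simps)
  qed (simp add: events_eq_borel)
  also have "\<dots> \<le> exp (l\<^sup>2 / (2 * (2 - a)) - (2 - a) * y\<^sup>2)"
    using truncated_cumulant_le_of_nonpos[OF a _ l] by (intro levy_tail_le_exp[OF \<mu> a char]) auto
  also have "\<dots> = exp (- (1/2) * (2 - a) * y\<^sup>2)"
    using a by (simp add: l_def power2_eq_square field_simps)
  finally show ?thesis .
qed

end

theorem lemma9:
  fixes M :: "'a measure" and X :: "'a \<Rightarrow> real" and \<alpha> :: real
  assumes "prob_space M"
    and "X \<in> borel_measurable M"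
    and "1 < \<alpha>" and "\<alpha> < 2"
    and "\<And>t. char (distr M borel X) t =
           exp (CLBINT x:{0<..1}. (iexp (t * x) - 1 - \<i> * complex_of_real (t * x))
                   * complex_of_real (1 / x powr (\<alpha> + 1)))"
  shows "(\<forall>y. 0 \<le> y \<and> y \<le> 1 / (2 - \<alpha>) \<longrightarrow>
           measure M {\<omega>\<in>space M. X \<omega> \<ge> y} \<le> exp (1/4) * exp (- (1/2) * (2 - \<alpha>) * y\<^sup>2)) \<and>
         (\<forall>y. 0 \<le> y \<and> y \<le> 2 / (2 - \<alpha>) \<longrightarrow>
           measure M {\<omega>\<in>space M. X \<omega> \<le> - y} \<le> exp (4/3) * exp (- (1/2) * (2 - \<alpha>) * y\<^sup>2))"
proof -
  interpret prob_space M by fact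
  let ?\<mu> = "distr M borel X"
  have \<mu>: "real_distribution ?\<mu>"
    using assms(2) by (rule real_distribution_distr)
  have char: "char ?\<mu> t = exp (CLBINT x:{0<..1}. levy_exponent_integrand \<alpha> t x)" for t
    using assms(5) by (simp add: levy_exponent_integrand_def levy_density_def)
  have law: "measure M {\<omega>\<in>space M. P (X \<omega>)} = measure ?\<mu> {x. P x}" if "Measurable.pred borel P" for P
    using assms(2) that by (subst measure_distr) (auto intro!: arg_cong[where f = "measure M"])
  show ?thesis
  proof (intro conjI allI impI)
    fix y :: real assume "0 \<le> y \<and> y \<le> 1 / (2 - \<alpha>)"
    then show "measure M {\<omega>\<in>space M. X \<omega> \<ge> y} \<le> exp (1/4) * exp (- (1/2) * (2 - \<alpha>) * y\<^sup>2)"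
      using law[of "\<lambda>x. y \<le> x"] levy_upper_tail[OF \<mu> assms(4) char] by simp
  next
    fix y :: real assume "0 \<le> y \<and> y \<le> 2 / (2 - \<alpha>)"
    then have "measure M {\<omega>\<in>space M. X \<omega> \<le> - y} \<le> exp (- (1/2) * (2 - \<alpha>) * y\<^sup>2)"
      using law[of "\<lambda>x. x \<le> - y"] levy_lower_tail[OF \<mu> assms(4) char] by simp
    then show "measure M {\<omega>\<in>space M. X \<omega> \<le> - y} \<le> exp (4/3) * exp (- (1/2) * (2 - \<alpha>) * y\<^sup>2)"
      by (rule order_trans) simp
  qed
qed

end
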